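(* Let $\mathbb{X}\subseteq\mathbb{P}^2$ be a $\Bbbk$-configuration of type $(d_1,\dots,d_s)$. Then $\Delta\mathbf{H}_\mathbb{X}(d_s-1)=t$, where $t$ is the largest integer such that $d_{s-t+1},\dots,d_s$ are consecutive integers (i.e. $d_{s-k}=d_s-k$ for $0\le k\le t-1$), and the number of lines in $\mathbb{P}^2$ containing $d_s$ points of $\mathbb{X}$ is at most $\Delta\mathbf{H}_\mathbb{X}(d_s-1)+1$.
   Context: $\Bbbk$ is an algebraically closed field and $R=\Bbbk[x_0,x_1,x_2]$. A $\Bbbk$-configuration of type $(d_1,\dots,d_s)$ is a finite set $\mathbb{X}\subseteq\mathbb{P}^2$ for which there exist integers $1\le d_1<\cdots<d_s$, subsets $\mathbb{X}_1,\dots,\mathbb{X}_s$ of $\mathbb{X}$ and distinct lines $\mathbb{L}_1,\dots,\mathbb{L}_s\subseteq\mathbb{P}^2$ such that (1) $\mathbb{X}=\bigcup_{i=1}^s\mathbb{X}_i$; (2) $|\mathbb{X}_i|=d_i$ and $\mathbb{X}_i\subseteq\mathbb{L}_i$ for each $i$; (3) for $1<i\le s$, $\mathbb{L}_i$ contains no point of $\mathbb{X}_j$ for any $j<i$. $I_\mathbb{X}\subseteq R$ is the homogeneous ideal of $\mathbb{X}$, $\mathbf{H}_\mathbb{X}(t)=\dim_\Bbbk R_t-\dim_\Bbbk(I_\mathbb{X})_t$, and $\Delta\mathbf{H}_\mathbb{X}(t)=\mathbf{H}_\mathbb{X}(t)-\mathbf{H}_\mathbb{X}(t-1)$ with $\mathbf{H}_\mathbb{X}(t)=0$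 for $t<0$. *)

theory Defs
  imports "HOL-Computational_Algebra.Polynomial" "HOL-Library.Function_Algebras"
begin

type_synonym 'a pt = "'a \<times> 'a \<times> 'a"

text \<open>Exponent vectors of monomials x0^a x1^b x2^c of degree t.\<close>
definition mono_exps :: "nat \<Rightarrow> (nat \<times> nat \<times> nat) set" where
  "mono_exps t = {(a, b, c). a + b + c = t}"

definition cscale :: "'a::field \<Rightarrow> (nat \<times> nat \<times> nat \<Rightarrow> 'a) \<Rightarrow> (nat \<times> nat \<times> nat \<Rightarrow> 'a)" where
  "cscale c f = (\<lambda>m. c * f m)"

text \<open>R_t: homogeneous forms of degree t, given by their coefficient functions.\<close>
definition forms :: "nat \<Rightarrow> (nat \<times> nat \<times> nat \<Rightarrow> 'a::field) set" where
  "forms t = {f. \<forall>m. m \<notin> mono_exps t \<longrightarrow> f m = 0}"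

definition eval_form :: "nat \<Rightarrow> (nat \<times> nat \<times> nat \<Rightarrow> 'a::field) \<Rightarrow> 'a pt \<Rightarrow> 'a" where
  "eval_form t f p = (case p of (x, y, z) \<Rightarrow>
     (\<Sum>(a, b, c)\<in>mono_exps t. f (a, b, c) * x ^ a * y ^ b * z ^ c))"

text \<open>(I_X)_t for X given by a set of homogeneous coordinate vectors.\<close>
definition ideal_deg :: "'a::field pt set \<Rightarrow> nat \<Rightarrow> (nat \<times> nat \<times> nat \<Rightarrow> 'a) set" where
  "ideal_deg X t = {f \<in> forms t. \<forall>p\<in>X. eval_form t f p = 0}"

definition hilb :: "'a::field pt set \<Rightarrow> nat \<Rightarrow> int" where
  "hilb X t = int (vector_space.dim cscale (forms t :: (nat \<times> nat \<times> nat \<Rightarrow> 'a) set))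
            - int (vector_space.dim cscale (ideal_deg X t))"

text \<open>First difference, with H(t) = 0 for t < 0.\<close>
definition dhilb :: "'a::field pt set \<Rightarrow> nat \<Rightarrow> int" where
  "dhilb X t = hilb X t - (if t = 0 then 0 else hilb X (t - 1))"

definition proportional :: "'a::field pt \<Rightarrow> 'a pt \<Rightarrow> bool" where
  "proportional u v \<longleftrightarrow> (\<exists>c. c \<noteq> 0 \<and> v = (c * fst u, c * fst (snd u), c * snd (snd u)))"

text \<open>A finite set of points of P^2, given by pairwise non-proportional nonzero representatives.\<close>
definition proj_point_set :: "'a::field pt set \<Rightarrow> bool" where
  "proj_point_set X \<longleftrightarrow> finite X \<and> (0, 0, 0) \<notin> X \<and>
     (\<forall>u\<in>X. \<forall>v\<in>X. proportional u v \<longrightarrow> u = v)"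

definition on_line :: "'a::field pt \<Rightarrow> 'a pt \<Rightarrow> bool" where
  "on_line l p \<longleftrightarrow> (case l of (l0, l1, l2) \<Rightarrow> case p of (x, y, z) \<Rightarrow> l0 * x + l1 * y + l2 * z = 0)"

text \<open>The line of P^2 with coefficient vector l, as the set of its (nonzero) coordinate vectors.\<close>
definition line_pts :: "'a::field pt \<Rightarrow> 'a pt set" where
  "line_pts l = {p. p \<noteq> (0, 0, 0) \<and> on_line l p}"

definition is_line :: "'a::field pt set \<Rightarrow> bool" where
  "is_line L \<longleftrightarrow> (\<exists>l. l \<noteq> (0, 0, 0) \<and> L = line_pts l)"

definition k_configuration ::
  "'a::field pt set \<Rightarrow> nat \<Rightarrow> (nat \<Rightarrow> nat) \<Rightarrow> bool" where
  "k_configuration X s d \<longleftrightarrow>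
     proj_point_set X \<and> 1 \<le> s \<and> 1 \<le> d 1 \<and> (\<forall>i. 1 \<le> i \<and> i < s \<longrightarrow> d i < d (i + 1)) \<and>
     (\<exists>Xs :: nat \<Rightarrow> 'a pt set. \<exists>Ls :: nat \<Rightarrow> 'a pt set.
        X = (\<Union>i\<in>{1..s}. Xs i) \<and>
        (\<forall>i\<in>{1..s}. is_line (Ls i) \<and> Xs i \<subseteq> X \<and> card (Xs i) = d i \<and> Xs i \<subseteq> Ls i) \<and>
        (\<forall>i\<in>{1..s}. \<forall>j\<in>{1..s}. i \<noteq> j \<longrightarrow> Ls i \<noteq> Ls j) \<and>
        (\<forall>i\<in>{1..s}. \<forall>j\<in>{1..s}. 1 < i \<and> j < i \<longrightarrow> Ls i \<inter> Xs j = {}))"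

definition consec_tail :: "nat \<Rightarrow> (nat \<Rightarrow> nat) \<Rightarrow> nat" where
  "consec_tail s d = (GREATEST t. t \<le> s \<and> (\<forall>k<t. d (s - k) = d s - k))"

end

theory Submission
  imports Defs
begin

text \<open>
  In degree \<open>t\<close> the Hilbert function of \<open>X\<close> is the dimension of the space spanned by the degree-\<open>t\<close>
  monomials viewed as functions on \<open>X\<close>. Follow it along \<open>Z\<^sub>m = X\<^sub>1 \<union> \<dots> \<union> X\<^sub>m\<close>: the \<open>d\<^sub>m\<close> new points
  lie on a line \<open>\<ell>\<close> missing \<open>Z\<^sub>m\<^sub>-\<^sub>1\<close>, so in degree \<open>u\<close> the value for \<open>Z\<^sub>m\<close> exceeds the value for
  \<open>Z\<^sub>m\<^sub>-\<^sub>1\<close> in degree \<open>u - 1\<close> by at least \<open>min d\<^sub>m (u + 1)\<close> (multiples of \<open>\<ell>\<close> together with forms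
  separating points of \<open>\<ell>\<close>) and by at most \<open>u + 1\<close> (modulo \<open>\<ell>\<close> only \<open>u + 1\<close> monomials of degree \<open>u\<close>
  remain). Hence \<open>Z\<^sub>m\<close> imposes independent conditions from degree \<open>d\<^sub>m - 1\<close> on, and its deficiency
  in degree \<open>d\<^sub>m - 2\<close> grows by one along a run of consecutive \<open>d\<^sub>i\<close> and drops back to one after a
  gap; for \<open>m = s\<close> this is \<open>\<Delta>H(d\<^sub>s - 1) = t\<close>.

  A line with \<open>d\<^sub>s\<close> points of \<open>X\<close> must be some \<open>L\<^sub>i\<close> when \<open>d\<^sub>s > s\<close>, since any other line meets
  each \<open>L\<^sub>j\<close> at most once; as \<open>L\<^sub>i\<close> carries at most \<open>d\<^sub>i + s - i\<close> points of \<open>X\<close>, the index \<open>i\<close> lies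
  in the final run, giving at most \<open>t\<close> such lines. If \<open>d\<^sub>s = s\<close> then \<open>d\<^sub>i = i\<close>, \<open>|X| = s(s+1)/2\<close>, and
  double counting incidences rules out \<open>s + 2\<close> lines with \<open>s\<close> points each.
\<close>

lemma (in vector_space) span_Int_span_eq_0:
  assumes ind: "independent (A \<union> B)" and dj: "A \<inter> B = {}"
    and xa: "x \<in> span A" and xb: "x \<in> span B"
  shows "x = 0"
proof -
  obtain T1 r where T1: "finite T1" "T1 \<subseteq> A" "x = (\<Sum>a\<in>T1. r a *s a)"
    using xa unfolding span_explicit by blast
  obtain T2 q where T2: "finite T2" "T2 \<subseteq> B" "x = (\<Sum>a\<in>T2. q a *s a)"
    using xb unfolding span_explicit by blast
  define u where "u v = (if v \<in> T1 then r v else - q v)" for v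
  have d: "T1 \<inter> T2 = {}" using T1 T2 dj by blast
  have "(\<Sum>v\<in>T1 \<union> T2. u v *s v) = (\<Sum>v\<in>T1. u v *s v) + (\<Sum>v\<in>T2. u v *s v)"
    using T1 T2 d by (simp add: sum.union_disjoint)
  also have "(\<Sum>v\<in>T1. u v *s v) = x" using T1 by (simp add: u_def)
  also have "(\<Sum>v\<in>T2. u v *s v) = - x"
    using T2 d by (auto simp: u_def sum_negf[symmetric] intro!: sum.cong)
  finally have z: "(\<Sum>v\<in>T1 \<union> T2. u v *s v) = 0" by simp
  have "\<And>v. v \<in> T1 \<Longrightarrow> r v = 0"
    using independentD[OF ind _ _ z] T1 T2 by (force simp: u_def)
  then show ?thesis using T1 by simp
qed

lemma (in vector_space) card_independent_le_dim:
  assumes "finite E" "independent I" "I \<subseteq> span E"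
  shows "card I \<le> dim E"
proof -
  obtain B where B: "B \<subseteq> span E" "independent B" "span E \<subseteq> span B" "card B = dim (span E)"
    using basis_exists by blast
  have "finite B" using independent_span_bound[OF assms(1) B(2)] B(1) by blast
  have "I \<subseteq> span B" using assms(3) B(3) by blast
  then have "card I \<le> card B" using independent_span_bound[OF \<open>finite B\<close> assms(2)] by blast
  then show ?thesis using B(4) by simp
qed

lemma (in vector_space_pair) dim_image_span_eq_card_Diff:
  assumes lf: "Vector_Spaces.linear s1 s2 f" and B: "vs1.independent B" and K: "K \<subseteq> B"
    and ker: "{x \<in> vs1.span B. f x = 0} = vs1.span K"
  shows "vs2.dim (f ` vs1.span B) = card (B - K)"
proof -
  define C where "C = B - K"
  have injC: "inj_on f (vs1.span C)"
    unfolding linear_inj_on_iff_eq_0[OF lf vs1.subspace_span]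
  proof (intro ballI impI)
    fix x assume x: "x \<in> vs1.span C" "f x = 0"
    then have "x \<in> vs1.span K" using ker vs1.span_mono[of C B] C_def by blast
    moreover have "vs1.independent (K \<union> C)" using B K C_def by (simp add: Un_absorb1)
    ultimately show "x = 0" using vs1.span_Int_span_eq_0[of K C x] x C_def by blast
  qed
  have "f ` K \<subseteq> {0}" using ker vs1.span_superset K by blast
  then have "f ` B \<subseteq> insert 0 (f ` C)" using C_def by blast
  then have "vs2.span (f ` B) = vs2.span (f ` C)"
    using vs2.span_mono[of "f ` C" "f ` B"] C_def
    by (metis Diff_subset image_mono subset_antisym vs2.span_insert_0 vs2.span_mono)
  then have "f ` vs1.span B = vs2.span (f ` C)" using linear_span_image[OF lf] by simp
  moreover have "vs2.independent (f ` C)"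
    using linear_independent_injective_image[OF lf _ injC] B C_def vs1.independent_mono by blast
  moreover have "card (f ` C) = card C"
    using card_image inj_on_subset[OF injC vs1.span_superset] by blast
  ultimately show ?thesis using vs2.dim_span_eq_card_independent C_def by simp
qed

lemma (in vector_space_pair) rank_nullity:
  assumes lf: "Vector_Spaces.linear s1 s2 f" and fB: "finite B"
  shows "vs1.dim (vs1.span B) = vs1.dim {x \<in> vs1.span B. f x = 0} + vs2.dim (f ` vs1.span B)"
proof -
  let ?K = "{x \<in> vs1.span B. f x = 0}"
  obtain K where K: "K \<subseteq> ?K" "vs1.independent K" "?K \<subseteq> vs1.span K"
    using vs1.maximal_independent_subset by blast
  obtain B' where B': "K \<subseteq> B'" "B' \<subseteq> vs1.span B" "vs1.independent B'" "vs1.span B \<subseteq> vs1.span B'"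
    using vs1.maximal_independent_subset_extend[of K "vs1.span B"] K by blast
  have fB': "finite B'" using vs1.independent_span_bound[OF fB B'(3,2)] by blast
  have spB': "vs1.span B' = vs1.span B"
    using B'(2,4) vs1.span_mono[OF B'(2)] by (simp add: vs1.span_span subset_antisym)
  have "vs1.subspace ?K"
    using linear_subspace_kernel[OF lf] vs1.subspace_inter[of "vs1.span B" "{x. f x = 0}"]
    by (simp add: Collect_conj_eq Int_commute)
  then have spK: "vs1.span K = ?K"
    using K vs1.span_minimal[OF K(1)] by (simp add: subset_antisym)
  have "vs1.dim (vs1.span B) = card B'" using vs1.dim_eq_card[OF spB' B'(3)] by simp
  moreover have "vs1.dim ?K = card K"
    using vs1.dim_span_eq_card_independent[OF K(2)] spK by simp
  moreover have "vs2.dim (f ` vs1.span B) = card (B' - K)"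
    using dim_image_span_eq_card_Diff[OF lf B'(3,1)] spB' spK by simp
  moreover have "card B' = card K + card (B' - K)"
    using fB' B'(1) by (metis card_Diff_subset finite_subset card_mono le_add_diff_inverse)
  ultimately show ?thesis by simp
qed

section \<open>The Hilbert function as a dimension of function spaces\<close>

definition fscale :: "'a::field \<Rightarrow> ('b \<Rightarrow> 'a) \<Rightarrow> ('b \<Rightarrow> 'a)" where
  "fscale c f = (\<lambda>x. c * f x)"

interpretation fv: vector_space "fscale :: 'a::field \<Rightarrow> ('b \<Rightarrow> 'a) \<Rightarrow> _"
  by unfold_locales (auto simp: fscale_def algebra_simps fun_eq_iff)

interpretation fvp: vector_space_pair "fscale :: 'a::field \<Rightarrow> ('b \<Rightarrow> 'a) \<Rightarrow> _"
  "fscale :: 'a \<Rightarrow> ('c \<Rightarrow> 'a) \<Rightarrow> _"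
  by unfold_locales

lemma fscale_apply [simp]: "fscale c f x = c * f x"
  by (simp add: fscale_def)

lemma cscale_eq_fscale: "cscale = fscale"
  by (auto simp: cscale_def fscale_def fun_eq_iff)

lemma linear_times_left: "Vector_Spaces.linear fscale fscale ((*) (f :: 'b \<Rightarrow> 'a::field))"
  by (auto simp: Vector_Spaces.linear_iff fv.vector_space_axioms fun_eq_iff algebra_simps)

lemma sum_fun_apply: "sum g A x = (\<Sum>a\<in>A. g a x)"
  by (induction A rule: infinite_finite_induct) auto

lemma prod_fun_apply: "prod g A x = (\<Prod>a\<in>A. g a x)"
  by (induction A rule: infinite_finite_induct) auto

lemma power_fun_apply [simp]: "(f ^ n) x = f x ^ n"
  by (induction n) auto

definition coord0 :: "'a pt \<Rightarrow> 'a" where "coord0 p = fst p"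
definition coord1 :: "'a pt \<Rightarrow> 'a" where "coord1 p = fst (snd p)"
definition coord2 :: "'a pt \<Rightarrow> 'a" where "coord2 p = snd (snd p)"

definition monomial :: "nat \<times> nat \<times> nat \<Rightarrow> 'a::field pt \<Rightarrow> 'a" where
  "monomial m = (case m of (a, b, c) \<Rightarrow> coord0 ^ a * coord1 ^ b * coord2 ^ c)"

definition monomials :: "nat \<Rightarrow> ('a::field pt \<Rightarrow> 'a) set" where
  "monomials t = monomial ` mono_exps t"

definition restrict0 :: "'b set \<Rightarrow> ('b \<Rightarrow> 'a::zero) \<Rightarrow> 'b \<Rightarrow> 'a" where
  "restrict0 Z v = (\<lambda>p. if p \<in> Z then v p else 0)"

definition monomials_on :: "'a::field pt set \<Rightarrow> nat \<Rightarrow> ('a pt \<Rightarrow> 'a) set" where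
  "monomials_on Z t = restrict0 Z ` monomials t"

lemma monomial_apply: "monomial (a, b, c) (x, y, z) = x ^ a * y ^ b * z ^ c"
  by (simp add: monomial_def coord0_def coord1_def coord2_def)

lemma finite_mono_exps: "finite (mono_exps t)"
proof -
  have "mono_exps t \<subseteq> {0..t} \<times> {0..t} \<times> {0..t}" by (auto simp: mono_exps_def)
  then show ?thesis by (rule finite_subset) auto
qed

lemma finite_monomials_on: "finite (monomials_on Z t)"
  by (simp add: monomials_on_def monomials_def finite_mono_exps)

lemma linear_restrict0: "Vector_Spaces.linear fscale fscale (restrict0 Z :: ('b \<Rightarrow> 'a::field) \<Rightarrow> _)"
  by (auto simp: Vector_Spaces.linear_iff fv.vector_space_axioms restrict0_def fun_eq_iff)

lemma eval_form_eq_sum_monomial: "eval_form t f p = (\<Sum>m\<in>mono_exps t. f m * monomial m p)"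
  unfolding eval_form_def
  by (cases p) (auto intro!: sum.cong simp: monomial_apply algebra_simps)

definition unit_form :: "nat \<times> nat \<times> nat \<Rightarrow> nat \<times> nat \<times> nat \<Rightarrow> 'a::field" where
  "unit_form m = (\<lambda>m'. if m' = m then 1 else 0)"

lemma forms_eq_span: "(forms t :: (nat \<times> nat \<times> nat \<Rightarrow> 'a::field) set) = fv.span (unit_form ` mono_exps t)"
proof
  show "forms t \<subseteq> fv.span (unit_form ` mono_exps t :: (nat \<times> nat \<times> nat \<Rightarrow> 'a) set)"
  proof
    fix f :: "nat \<times> nat \<times> nat \<Rightarrow> 'a" assume f: "f \<in> forms t"
    have "f = (\<Sum>m\<in>mono_exps t. fscale (f m) (unit_form m))"
      using f finite_mono_exps[of t]
      by (auto simp: fun_eq_iff sum_fun_apply unit_form_def forms_def if_distrib cong: if_cong)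
    also have "\<dots> \<in> fv.span (unit_form ` mono_exps t)"
      by (intro fv.span_sum fv.span_scale fv.span_base) auto
    finally show "f \<in> fv.span (unit_form ` mono_exps t)" .
  qed
  show "fv.span (unit_form ` mono_exps t :: (nat \<times> nat \<times> nat \<Rightarrow> 'a) set) \<subseteq> forms t"
    by (rule fv.span_minimal) (auto simp: forms_def unit_form_def fv.subspace_def)
qed

definition eval_on :: "'a::field pt set \<Rightarrow> nat \<Rightarrow> (nat \<times> nat \<times> nat \<Rightarrow> 'a) \<Rightarrow> 'a pt \<Rightarrow> 'a" where
  "eval_on X t f = restrict0 X (eval_form t f)"

lemma linear_eval_on: "Vector_Spaces.linear fscale fscale (eval_on X t)"
  by (auto simp: Vector_Spaces.linear_iff fv.vector_space_axioms restrict0_def fun_eq_iff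
      eval_on_def eval_form_eq_sum_monomial sum.distrib sum_distrib_left algebra_simps)

lemma eval_on_unit_form:
  fixes X :: "'a::field pt set"
  assumes "m \<in> mono_exps t"
  shows "eval_on X t (unit_form m) = restrict0 X (monomial m)"
proof -
  have "eval_form t (unit_form m) p = (monomial m p :: 'a)" for p
  proof -
    have "eval_form t (unit_form m) p = (\<Sum>m'\<in>mono_exps t. if m' = m then monomial m p else 0)"
      unfolding eval_form_eq_sum_monomial by (intro sum.cong) (auto simp: unit_form_def)
    then show ?thesis using assms finite_mono_exps[of t] by simp
  qed
  then have "eval_form t (unit_form m) = (monomial m :: 'a pt \<Rightarrow> 'a)" by (rule ext)
  then show ?thesis by (simp add: eval_on_def)
qed

text \<open>Rank-nullity for evaluation at the points of \<open>X\<close>, whose image is spanned by the restricted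
  monomials.\<close>
lemma hilb_eq_dim_monomials_on: "hilb X t = int (fv.dim (monomials_on X t))"
proof -
  define U where "U = (unit_form ` mono_exps t :: (nat \<times> nat \<times> nat \<Rightarrow> 'a) set)"
  have "fv.dim (fv.span U) = fv.dim {f \<in> fv.span U. eval_on X t f = 0} + fv.dim (eval_on X t ` fv.span U)"
    unfolding U_def by (rule fvp.rank_nullity[OF linear_eval_on finite_imageI[OF finite_mono_exps]])
  moreover have "{f \<in> fv.span U. eval_on X t f = 0} = ideal_deg X t"
    unfolding U_def forms_eq_span[symmetric] ideal_deg_def
    by (auto simp: eval_on_def restrict0_def fun_eq_iff)
  moreover have "eval_on X t ` fv.span U = fv.span (monomials_on X t)"
  proof -
    have "eval_on X t ` U = monomials_on X t"
      by (auto simp: U_def monomials_on_def monomials_def eval_on_unit_form image_image intro!: image_cong)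
    then show ?thesis using fvp.linear_span_image[OF linear_eval_on] by metis
  qed
  ultimately show ?thesis
    unfolding hilb_def cscale_eq_fscale forms_eq_span U_def by simp
qed

definition monomials_in ::
    "('b \<Rightarrow> 'a) \<Rightarrow> ('b \<Rightarrow> 'a) \<Rightarrow> ('b \<Rightarrow> 'a) \<Rightarrow> nat \<Rightarrow> ('b \<Rightarrow> 'a::comm_ring_1) set" where
  "monomials_in x y z n = {x ^ a * y ^ b * z ^ c | a b c. a + b + c = n}"

lemma monomials_inI: "a + b + c = n \<Longrightarrow> x ^ a * y ^ b * z ^ c \<in> monomials_in x y z n"
  unfolding monomials_in_def by blast

lemma monomials_in_rotate: "monomials_in x y z n = monomials_in y z x n"
  unfolding monomials_in_def
proof (intro set_eqI iffI)
    fix f assume "f \<in> {x ^ a * y ^ b * z ^ c |a b c. a + b + c = n}"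
    then obtain a b c where "f = x ^ a * y ^ b * z ^ c" "a + b + c = n" by blast
    then show "f \<in> {y ^ a * z ^ b * x ^ c |a b c. a + b + c = n}"
      by (intro CollectI exI[of _ b] exI[of _ c] exI[of _ a]) (simp add: ac_simps)
  next
    fix f assume "f \<in> {y ^ a * z ^ b * x ^ c |a b c. a + b + c = n}"
    then obtain a b c where "f = y ^ a * z ^ b * x ^ c" "a + b + c = n" by blast
    then show "f \<in> {x ^ a * y ^ b * z ^ c |a b c. a + b + c = n}"
      by (intro CollectI exI[of _ c] exI[of _ a] exI[of _ b]) (simp add: ac_simps)
qed

lemma monomials_eq_monomials_in: "monomials n = monomials_in coord0 coord1 coord2 n"
  unfolding monomials_def monomials_in_def monomial_def mono_exps_def
  by (auto intro!: image_eqI[where x = "(a, b, c)" for a b c])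

text \<open>Modulo multiples of \<open>lin = \<alpha> x + \<beta> y + \<gamma> z\<close> with \<open>\<gamma> \<noteq> 0\<close>, the variable \<open>z\<close> can be
  eliminated: \<open>z m = (lin m - \<alpha> x m - \<beta> y m) / \<gamma>\<close> lowers the \<open>z\<close>-degree.\<close>
lemma monomials_in_Suc_subset_span:
  fixes x y z :: "'b \<Rightarrow> 'a::field" and \<alpha> \<beta> \<gamma> :: 'a
  assumes "\<gamma> \<noteq> 0"
  defines "lin \<equiv> fscale \<alpha> x + fscale \<beta> y + fscale \<gamma> z"
  shows "monomials_in x y z (Suc n) \<subseteq>
    fv.span ((*) lin ` monomials_in x y z n \<union> (\<lambda>a. x ^ a * y ^ (Suc n - a)) ` {..Suc n})"
    (is "_ \<subseteq> ?S")
proof -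
  have main: "\<forall>a b. a + b + c = Suc n \<longrightarrow> x ^ a * y ^ b * z ^ c \<in> ?S" for c
  proof (induction c)
    case 0
    show ?case
    proof (intro allI impI)
      fix a b assume "a + b + 0 = Suc n"
      then have "b = Suc n - a" "a \<in> {..Suc n}" by auto
      then show "x ^ a * y ^ b * z ^ 0 \<in> ?S"
        by (intro fv.span_base UnI2 image_eqI[where x = a]) (simp_all only: power_0 mult_1_right)
    qed
  next
    case (Suc c)
    show ?case
    proof (intro allI impI)
      fix a b assume abc: "a + b + Suc c = Suc n"
      let ?m = "x ^ a * y ^ b * z ^ c"
      have eq: "x ^ a * y ^ b * z ^ Suc c = fscale (1 / \<gamma>) (lin * ?m)
          - fscale (\<alpha> / \<gamma>) (x ^ Suc a * y ^ b * z ^ c) - fscale (\<beta> / \<gamma>) (x ^ a * y ^ Suc b * z ^ c)"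
        unfolding fun_eq_iff lin_def
        by (simp only: fscale_apply times_fun_apply plus_fun_apply minus_apply power_fun_apply)
          (use assms(1) in \<open>simp add: field_simps\<close>)
      have "lin * ?m \<in> ?S"
      proof -
        have "?m \<in> monomials_in x y z n" using abc by (intro monomials_inI) simp
        then show ?thesis by (intro fv.span_base UnI1 imageI)
      qed
      moreover have "x ^ Suc a * y ^ b * z ^ c \<in> ?S" "x ^ a * y ^ Suc b * z ^ c \<in> ?S"
        by (rule Suc.IH[rule_format], use abc in simp)+
      ultimately show "x ^ a * y ^ b * z ^ Suc c \<in> ?S"
        unfolding eq by (intro fv.span_diff fv.span_scale)
    qed
  qed
  show ?thesis
  proof
    fix f assume "f \<in> monomials_in x y z (Suc n)"
    then obtain a b c where "f = x ^ a * y ^ b * z ^ c" "a + b + c = Suc n"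
      unfolding monomials_in_def by blast
    then show "f \<in> ?S" using main by blast
  qed
qed

definition linform :: "'a::field pt \<Rightarrow> 'a pt \<Rightarrow> 'a" where
  "linform l p = (case l of (l0, l1, l2) \<Rightarrow> case p of (x, y, z) \<Rightarrow> l0 * x + l1 * y + l2 * z)"

lemma on_line_iff_linform: "on_line l p \<longleftrightarrow> linform l p = 0"
  by (cases l; cases p) (simp add: on_line_def linform_def)

lemma linform_eq: "linform (l0, l1, l2) = fscale l0 coord0 + fscale l1 coord1 + fscale l2 coord2"
  by (auto simp: fun_eq_iff linform_def coord0_def coord1_def coord2_def)

lemma monomials_Suc_subset_span:
  assumes "l \<noteq> (0, 0, 0)"
  obtains T where "finite T" "card T \<le> t + 2"
    "monomials (Suc t) \<subseteq> fv.span ((*) (linform l) ` monomials t \<union> T)"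
proof -
  have T: "finite ((\<lambda>a. x ^ a * y ^ (Suc t - a)) ` {..Suc t})"
    "card ((\<lambda>a. x ^ a * y ^ (Suc t - a)) ` {..Suc t}) \<le> t + 2" for x y :: "'a pt \<Rightarrow> 'a"
    using card_image_le[of "{..Suc t}"] by auto
  obtain l0 l1 l2 where l: "l = (l0, l1, l2)" by (cases l)
  have rot1: "monomials s = monomials_in coord1 coord2 coord0 s" for s :: nat
    by (simp only: monomials_eq_monomials_in monomials_in_rotate[of coord0 coord1 coord2])
  have rot2: "monomials s = monomials_in coord2 coord0 coord1 s" for s :: nat
    by (simp only: rot1 monomials_in_rotate[of coord1 coord2 coord0])
  consider "l2 \<noteq> 0" | "l1 \<noteq> 0" | "l0 \<noteq> 0" using assms l by auto
  then show thesis
  proof cases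
    case 1
    have "linform l = fscale l0 coord0 + fscale l1 coord1 + fscale l2 coord2"
      by (simp add: l linform_eq)
    then show thesis using that[OF T] monomials_in_Suc_subset_span[of l2 coord0 coord1 coord2 t l0 l1] 1
      by (simp only: monomials_eq_monomials_in) blast
  next
    case 2
    have "linform l = fscale l2 coord2 + fscale l0 coord0 + fscale l1 coord1"
      by (simp add: l linform_eq add_ac)
    then show thesis using that[OF T] monomials_in_Suc_subset_span[of l1 coord2 coord0 coord1 t l2 l0] 2
      by (simp only: rot2) blast
  next
    case 3
    have "linform l = fscale l1 coord1 + fscale l2 coord2 + fscale l0 coord0"
      by (simp add: l linform_eq add_ac)
    then show thesis using that[OF T] monomials_in_Suc_subset_span[of l0 coord1 coord2 coord0 t l1 l2] 3
      by (simp only: rot1) blast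
  qed
qed

definition polyfuns :: "nat \<Rightarrow> ('a::field pt \<Rightarrow> 'a) set" where
  "polyfuns t = fv.span (monomials t)"

lemma linform_times_monomial:
  assumes "m \<in> monomials t"
  shows "linform l * m \<in> polyfuns (Suc t)"
proof -
  obtain a b c where m: "m = coord0 ^ a * coord1 ^ b * coord2 ^ c" and abc: "a + b + c = t"
    using assms unfolding monomials_eq_monomials_in monomials_in_def by blast
  obtain l0 l1 l2 where l: "l = (l0, l1, l2)" by (cases l)
  have "linform l * m = fscale l0 (coord0 ^ Suc a * coord1 ^ b * coord2 ^ c)
      + fscale l1 (coord0 ^ a * coord1 ^ Suc b * coord2 ^ c) + fscale l2 (coord0 ^ a * coord1 ^ b * coord2 ^ Suc c)"
    unfolding fun_eq_iff l linform_eq m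
    by (simp only: fscale_apply times_fun_apply plus_fun_apply power_fun_apply)
      (simp add: algebra_simps)
  moreover have "coord0 ^ Suc a * coord1 ^ b * coord2 ^ c \<in> monomials (Suc t)"
    "coord0 ^ a * coord1 ^ Suc b * coord2 ^ c \<in> monomials (Suc t)"
    "coord0 ^ a * coord1 ^ b * coord2 ^ Suc c \<in> monomials (Suc t)"
    unfolding monomials_eq_monomials_in by (rule monomials_inI, use abc in simp)+
  ultimately show ?thesis
    unfolding polyfuns_def by (metis fv.span_add fv.span_base fv.span_scale)
qed

lemma linform_times_polyfuns:
  assumes "v \<in> polyfuns t"
  shows "linform l * v \<in> polyfuns (Suc t)"
proof -
  have "(*) (linform l) ` polyfuns t = fv.span ((*) (linform l) ` monomials t)"
    unfolding polyfuns_def using fvp.linear_span_image[OF linear_times_left] by metis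
  also have "\<dots> \<subseteq> polyfuns (Suc t)"
    unfolding polyfuns_def
    by (intro fv.span_minimal fv.subspace_span) (use linform_times_monomial polyfuns_def in blast)
  finally show ?thesis using assms by blast
qed

lemma one_in_polyfuns: "1 \<in> polyfuns 0"
proof -
  have "(1 :: 'a pt \<Rightarrow> 'a) \<in> monomials 0"
    unfolding monomials_eq_monomials_in monomials_in_def by force
  then show ?thesis unfolding polyfuns_def by (rule fv.span_base)
qed

lemma linform_power_times_polyfuns:
  "v \<in> polyfuns t \<Longrightarrow> linform l ^ k * v \<in> polyfuns (t + k)"
  by (induction k) (auto simp: mult.assoc dest: linform_times_polyfuns)

lemma prod_linforms_times_polyfuns:
  "finite F \<Longrightarrow> v \<in> polyfuns t \<Longrightarrow> (\<Prod>q\<in>F. linform (g q)) * v \<in> polyfuns (t + card F)"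
  by (induction F rule: finite_induct) (auto simp: mult.assoc dest: linform_times_polyfuns)

lemma restrict0_polyfuns: "restrict0 Z ` polyfuns t = fv.span (monomials_on Z t)"
  unfolding polyfuns_def monomials_on_def using fvp.linear_span_image[OF linear_restrict0] by metis

lemma dim_monomials_on_le_card:
  fixes Z :: "'a::field pt set"
  assumes "finite Z"
  shows "fv.dim (monomials_on Z t) \<le> card Z"
proof -
  define ind where "ind p = (\<lambda>q. if q = p then 1 else 0 :: 'a)" for p :: "'a pt"
  have "monomials_on Z t \<subseteq> fv.span (ind ` Z)"
  proof
    fix w assume "w \<in> monomials_on Z t"
    then obtain v where w: "w = restrict0 Z v" by (auto simp: monomials_on_def)
    have "w = (\<Sum>p\<in>Z. fscale (v p) (ind p))"
      using assms by (auto simp: w restrict0_def fun_eq_iff sum_fun_apply ind_def if_distrib cong: if_cong)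
    also have "\<dots> \<in> fv.span (ind ` Z)"
      by (intro fv.span_sum fv.span_scale fv.span_base) auto
    finally show "w \<in> fv.span (ind ` Z)" .
  qed
  then have "fv.dim (monomials_on Z t) \<le> card (ind ` Z)"
    using fv.dim_le_card assms by blast
  also have "\<dots> \<le> card Z" by (rule card_image_le[OF assms])
  finally show ?thesis .
qed

lemma dim_monomials_on_0_le: "fv.dim (monomials_on Z 0) \<le> 1"
proof -
  have "mono_exps 0 = {(0, 0, 0)}" by (auto simp: mono_exps_def)
  then have "card (monomials_on Z 0) \<le> 1" by (simp add: monomials_on_def monomials_def)
  then show ?thesis using fv.dim_le_card'[OF finite_monomials_on[of Z 0]] by linarith
qed

section \<open>Adding the points of a line\<close>

lemma restrict0_linform_times:
  assumes "\<forall>y\<in>Y. linform l y = 0"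
  shows "restrict0 (X \<union> Y) (linform l * w) = linform l * restrict0 X w"
  using assms by (auto simp: restrict0_def fun_eq_iff)

text \<open>Modulo multiples of the line's form only \<open>u + 2\<close> monomials of degree \<open>u + 1\<close> remain, and the
  multiples restrict to multiples of functions on \<open>X\<close>.\<close>
lemma dim_monomials_on_Suc_add_line_le:
  assumes l: "l \<noteq> (0, 0, 0)" and Y: "\<forall>y\<in>Y. linform l y = 0"
  shows "fv.dim (monomials_on (X \<union> Y) (Suc u)) \<le> fv.dim (monomials_on X u) + (u + 2)"
proof -
  obtain T where T: "finite T" "card T \<le> u + 2"
    "monomials (Suc u) \<subseteq> fv.span ((*) (linform l) ` monomials u \<union> T)"
    using monomials_Suc_subset_span[OF l] by blast
  obtain B where B: "B \<subseteq> monomials_on X u" "fv.independent B" "monomials_on X u \<subseteq> fv.span B"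
    "card B = fv.dim (monomials_on X u)"
    using fv.basis_exists by blast
  have fB: "finite B" using B(1) finite_monomials_on finite_subset by blast
  let ?W = "(*) (linform l) ` B \<union> restrict0 (X \<union> Y) ` T"
  have "restrict0 (X \<union> Y) ` (*) (linform l) ` monomials u \<subseteq> fv.span ?W"
  proof
    fix x assume "x \<in> restrict0 (X \<union> Y) ` (*) (linform l) ` monomials u"
    then obtain w where w: "w \<in> monomials u" "x = restrict0 (X \<union> Y) (linform l * w)" by blast
    have "restrict0 X w \<in> fv.span B" using w B(3) by (auto simp: monomials_on_def)
    then have "x \<in> (*) (linform l) ` fv.span B"
      using w restrict0_linform_times[OF Y] by blast
    also have "\<dots> = fv.span ((*) (linform l) ` B)"
      using fvp.linear_span_image[OF linear_times_left] by metis
    also have "\<dots> \<subseteq> fv.span ?W" by (intro fv.span_mono) auto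
    finally show "x \<in> fv.span ?W" .
  qed
  then have "fv.span (restrict0 (X \<union> Y) ` ((*) (linform l) ` monomials u \<union> T)) \<subseteq> fv.span ?W"
    by (intro fv.span_minimal fv.subspace_span) (auto intro: fv.span_base)
  moreover have "monomials_on (X \<union> Y) (Suc u)
      \<subseteq> fv.span (restrict0 (X \<union> Y) ` ((*) (linform l) ` monomials u \<union> T))"
    using T(3) fvp.linear_span_image[OF linear_restrict0, of "X \<union> Y"]
    unfolding monomials_on_def by (metis image_mono)
  ultimately have "monomials_on (X \<union> Y) (Suc u) \<subseteq> fv.span ?W" by blast
  then have "fv.dim (monomials_on (X \<union> Y) (Suc u)) \<le> card ?W"
    using fv.dim_le_card fB T(1) by blast
  also have "\<dots> \<le> card B + card T"
    using card_Un_le card_image_le fB T(1) by (meson add_mono order_trans)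
  finally show ?thesis using B(4) T(2) by linarith
qed

lemma independent_Un_diagonal:
  fixes A :: "('b \<Rightarrow> 'a::field) set" and h :: "'b \<Rightarrow> 'b \<Rightarrow> 'a"
  assumes fA: "finite A" and iA: "fv.independent A" and fY: "finite Y"
    and A0: "\<forall>a\<in>A. \<forall>y\<in>Y. a y = 0"
    and hd: "\<forall>y\<in>Y. h y y \<noteq> 0"
    and ho: "\<forall>y\<in>Y. \<forall>y'\<in>Y. y' \<noteq> y \<longrightarrow> h y y' = 0"
  shows "fv.independent (A \<union> h ` Y) \<and> card (A \<union> h ` Y) = card A + card Y"
proof -
  have inj: "inj_on h Y"
    by (rule inj_onI) (use hd ho in metis)
  have dj: "A \<inter> h ` Y = {}" using A0 hd by fastforce
  have "fv.independent (A \<union> h ` Y)"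
  proof (rule fv.independent_if_scalars_zero)
    show "finite (A \<union> h ` Y)" using fA fY by simp
    fix f x assume s: "(\<Sum>x\<in>A \<union> h ` Y. fscale (f x) x) = 0" and x: "x \<in> A \<union> h ` Y"
    have split: "(\<Sum>x\<in>A \<union> h ` Y. fscale (f x) x) = (\<Sum>x\<in>A. fscale (f x) x) + (\<Sum>x\<in>h ` Y. fscale (f x) x)"
      using fA fY dj by (simp add: sum.union_disjoint)
    have hz: "f (h y) = 0" if y: "y \<in> Y" for y
    proof -
      have "0 = (\<Sum>x\<in>A \<union> h ` Y. fscale (f x) x) y" using s by simp
      also have "\<dots> = (\<Sum>x\<in>A. f x * x y) + (\<Sum>x\<in>h ` Y. f x * x y)"
        unfolding split by (simp add: sum_fun_apply)
      also have "(\<Sum>x\<in>A. f x * x y) = 0" using A0 y by (intro sum.neutral) simp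
      also have "(\<Sum>x\<in>h ` Y. f x * x y) = (\<Sum>y'\<in>Y. f (h y') * h y' y)"
        by (simp add: sum.reindex[OF inj])
      also have "\<dots> = f (h y) * h y y"
      proof -
        have "\<forall>y'\<in>Y - {y}. f (h y') * h y' y = 0" using ho y by auto
        then show ?thesis using y fY by (subst sum.remove[of Y y]) (auto intro!: sum.neutral)
      qed
      finally show ?thesis using hd y by simp
    qed
    then have "(\<Sum>x\<in>h ` Y. fscale (f x) x) = 0"
      by (intro sum.neutral) (auto simp: fun_eq_iff)
    then have "(\<Sum>x\<in>A. fscale (f x) x) = 0" using s split by simp
    then show "f x = 0"
      using fv.independentD[OF iA fA subset_refl] x hz by blast
  qed
  then show ?thesis using card_Un_disjoint[OF fA _ dj] fY card_image[OF inj] by simp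
qed

lemma exists_linform_separating:
  fixes p q :: "'a::field pt"
  assumes p: "p \<noteq> (0, 0, 0)" and q: "q \<noteq> (0, 0, 0)" and np: "\<not> proportional q p"
  shows "\<exists>l. linform l q = 0 \<and> linform l p \<noteq> 0"
proof (rule ccontr)
  assume na: "\<not> ?thesis"
  obtain p0 p1 p2 where pp: "p = (p0, p1, p2)" by (cases p)
  obtain q0 q1 q2 where qq: "q = (q0, q1, q2)" by (cases q)
  have e0: "q1 * p2 = q2 * p1" using na[unfolded not_ex, rule_format, of "(0, -q2, q1)"]
    by (auto simp: linform_def pp qq algebra_simps)
  have e1: "q2 * p0 = q0 * p2" using na[unfolded not_ex, rule_format, of "(q2, 0, -q0)"]
    by (auto simp: linform_def pp qq algebra_simps)
  have e2: "q0 * p1 = q1 * p0" using na[unfolded not_ex, rule_format, of "(-q1, q0, 0)"]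
    by (auto simp: linform_def pp qq algebra_simps)
  consider "q0 \<noteq> 0" | "q0 = 0" "q1 \<noteq> 0" | "q0 = 0" "q1 = 0" "q2 \<noteq> 0" using q qq by auto
  then have "proportional q p"
  proof cases
    case 1
    then have "p0 \<noteq> 0" using p e1 e2 by (auto simp: pp)
    then show ?thesis unfolding proportional_def pp qq using 1 e1 e2
      by (intro exI[of _ "p0 / q0"]) (auto simp: field_simps)
  next
    case 2
    then have "p1 \<noteq> 0" using p e0 e2 by (auto simp: pp)
    then show ?thesis unfolding proportional_def pp qq using 2 e0 e2
      by (intro exI[of _ "p1 / q1"]) (auto simp: field_simps)
  next
    case 3
    then have "p2 \<noteq> 0" using p e0 e1 by (auto simp: pp)
    then show ?thesis unfolding proportional_def pp qq using 3 e0 e1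
      by (intro exI[of _ "p2 / q2"]) (auto simp: field_simps)
  qed
  then show False using np by simp
qed

lemma exists_linform_nonzero:
  fixes p :: "'a::field pt"
  assumes "p \<noteq> (0, 0, 0)"
  shows "\<exists>l. linform l p \<noteq> 0"
proof -
  obtain p0 p1 p2 where pp: "p = (p0, p1, p2)" by (cases p)
  consider "p0 \<noteq> 0" | "p1 \<noteq> 0" | "p2 \<noteq> 0" using assms pp by auto
  then show ?thesis
  proof cases
    case 1 then show ?thesis by (intro exI[of _ "(1, 0, 0)"]) (simp add: linform_def pp)
  next
    case 2 then show ?thesis by (intro exI[of _ "(0, 1, 0)"]) (simp add: linform_def pp)
  next
    case 3 then show ?thesis by (intro exI[of _ "(0, 0, 1)"]) (simp add: linform_def pp)
  qed
qed

text \<open>The form is a product of lines through the other points, padded to degree \<open>u\<close> by a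
  power of a line missing \<open>y\<close>.\<close>
lemma exists_polyfun_vanishing_except:
  fixes Y :: "'a::field pt set"
  assumes fY: "finite Y" and cY: "card Y \<le> u + 1" and y: "y \<in> Y"
    and Y0: "(0, 0, 0) \<notin> Y" and Yp: "\<forall>p\<in>Y. \<forall>q\<in>Y. proportional p q \<longrightarrow> p = q"
  shows "\<exists>f \<in> polyfuns u. f y \<noteq> 0 \<and> (\<forall>y'\<in>Y - {y}. f y' = 0)"
proof -
  have "\<forall>q\<in>Y - {y}. \<exists>l. linform l q = 0 \<and> linform l y \<noteq> 0"
    using exists_linform_separating Y0 Yp y by (metis DiffE insertI1)
  then obtain g where g: "\<And>q. q \<in> Y - {y} \<Longrightarrow> linform (g q) q = 0 \<and> linform (g q) y \<noteq> 0"
    by metis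
  obtain l where l: "linform l y \<noteq> 0" using exists_linform_nonzero Y0 y by metis
  define f where "f = (\<Prod>q\<in>Y - {y}. linform (g q)) * (linform l ^ (u + 1 - card Y) * 1)"
  have "f \<in> polyfuns (0 + (u + 1 - card Y) + card (Y - {y}))"
    unfolding f_def using fY
    by (intro prod_linforms_times_polyfuns linform_power_times_polyfuns one_in_polyfuns) auto
  moreover have "0 + (u + 1 - card Y) + card (Y - {y}) = u"
    using cY y fY card_gt_0_iff[of Y] by auto
  ultimately have "f \<in> polyfuns u" by simp
  moreover have "f y \<noteq> 0" using g l fY by (simp add: f_def prod_fun_apply)
  moreover have "f y' = 0" if "y' \<in> Y - {y}" for y'
  proof -
    have "(\<Prod>q\<in>Y - {y}. linform (g q) y') = 0"
      using g[OF that] that fY by (metis finite_Diff prod_zero_iff)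
    then show ?thesis by (simp add: f_def prod_fun_apply)
  qed
  ultimately show ?thesis by blast
qed

definition hilbert_fun :: "'a::field pt set \<Rightarrow> int \<Rightarrow> nat" where
  "hilbert_fun Z v = (if v < 0 then 0 else fv.dim (monomials_on Z (nat v)))"

lemma hilbert_fun_of_nat [simp]: "hilbert_fun Z (int t) = fv.dim (monomials_on Z t)"
  by (simp add: hilbert_fun_def)

lemma hilbert_fun_neg: "v < 0 \<Longrightarrow> hilbert_fun Z v = 0"
  by (simp add: hilbert_fun_def)

lemma hilbert_fun_minus_one:
  "hilbert_fun Z (int t - 1) = (if t = 0 then 0 else fv.dim (monomials_on Z (t - 1)))"
  by (simp add: hilbert_fun_def nat_diff_distrib')

lemma dhilb_eq_hilbert_fun: "dhilb X t = int (hilbert_fun X (int t)) - int (hilbert_fun X (int t - 1))"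
  by (simp add: dhilb_def hilb_eq_dim_monomials_on hilbert_fun_minus_one)

lemma hilbert_fun_le_card: "finite Z \<Longrightarrow> hilbert_fun Z v \<le> card Z"
  by (simp add: hilbert_fun_def dim_monomials_on_le_card)

lemma hilbert_fun_add_line_le:
  assumes "l \<noteq> (0, 0, 0)" and "\<forall>y\<in>Y. linform l y = 0"
  shows "hilbert_fun (X \<union> Y) (int u) \<le> hilbert_fun X (int u - 1) + (u + 1)"
proof -
  have "fv.dim (monomials_on (X \<union> Y) u) \<le> hilbert_fun X (int u - 1) + (u + 1)"
  proof (cases u)
    case 0
    then show ?thesis using dim_monomials_on_0_le[of "X \<union> Y"] by simp
  next
    case (Suc u')
    then show ?thesis using dim_monomials_on_Suc_add_line_le[OF assms, of X u']
      by (simp add: hilbert_fun_minus_one)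
  qed
  then show ?thesis by simp
qed

text \<open>Multiplication by the line's form is injective on functions supported off the line, so a
  basis in degree \<open>u\<close> on \<open>X\<close> yields independent functions in degree \<open>u + 1\<close> vanishing on \<open>Y\<close>.\<close>
lemma independent_line_multiples:
  assumes X0: "\<forall>p\<in>X. linform l p \<noteq> 0" and Y0: "\<forall>y\<in>Y. linform l y = 0"
  obtains A where "finite A" "fv.independent A" "card A = fv.dim (monomials_on X u)"
    "A \<subseteq> fv.span (monomials_on (X \<union> Y) (Suc u))" "\<forall>a\<in>A. \<forall>y\<in>Y. a y = 0"
proof -
  obtain B where B: "B \<subseteq> monomials_on X u" "fv.independent B" "monomials_on X u \<subseteq> fv.span B"
    "card B = fv.dim (monomials_on X u)"
    using fv.basis_exists by blast
  have fB: "finite B" using B(1) finite_monomials_on finite_subset by blast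
  have supp: "fv.span B \<subseteq> {v. \<forall>p. p \<notin> X \<longrightarrow> v p = 0}"
    using B(1) by (intro fv.span_minimal) (auto simp: monomials_on_def restrict0_def fv.subspace_def)
  have inj: "inj_on ((*) (linform l)) (fv.span B)"
    unfolding fvp.linear_inj_on_iff_eq_0[OF linear_times_left fv.subspace_span]
  proof (intro ballI impI ext)
    fix v p assume v: "v \<in> fv.span B" "linform l * v = 0"
    show "v p = 0 p"
    proof (cases "p \<in> X")
      case True
      then show ?thesis using X0 fun_cong[OF v(2), of p] by simp
    qed (use v supp in \<open>auto simp del: split_paired_All\<close>)
  qed
  show thesis
  proof (rule that)
    show "finite ((*) (linform l) ` B)" using fB by simp
    show "fv.independent ((*) (linform l) ` B)"
      by (rule fvp.linear_independent_injective_image[OF linear_times_left B(2) inj])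
    show "card ((*) (linform l) ` B) = fv.dim (monomials_on X u)"
      using card_image[OF inj_on_subset[OF inj fv.span_superset]] B(4) by simp
    show "(*) (linform l) ` B \<subseteq> fv.span (monomials_on (X \<union> Y) (Suc u))"
    proof
      fix x assume "x \<in> (*) (linform l) ` B"
      then obtain w where w: "w \<in> monomials u" "x = linform l * restrict0 X w"
        using B(1) by (auto simp: monomials_on_def)
      have "x = restrict0 (X \<union> Y) (linform l * w)" using w restrict0_linform_times[OF Y0] by simp
      moreover have "linform l * w \<in> polyfuns (Suc u)"
        using w by (intro linform_times_polyfuns) (simp add: polyfuns_def fv.span_base)
      ultimately show "x \<in> fv.span (monomials_on (X \<union> Y) (Suc u))"
        using restrict0_polyfuns by blast
    qed
    show "\<forall>a\<in>(*) (linform l) ` B. \<forall>y\<in>Y. a y = 0" using Y0 by auto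
  qed
qed

text \<open>The line multiples vanish on \<open>Y\<close>; adding forms that separate up to \<open>u + 1\<close> points of \<open>Y\<close>
  keeps the family independent.\<close>
lemma hilbert_fun_add_line_ge:
  fixes X Y :: "'a::field pt set"
  assumes fY: "finite Y" and Y0: "\<forall>y\<in>Y. linform l y = 0" and X0: "\<forall>p\<in>X. linform l p \<noteq> 0"
    and Yn: "(0, 0, 0) \<notin> Y" and Yp: "\<forall>p\<in>Y. \<forall>q\<in>Y. proportional p q \<longrightarrow> p = q"
  shows "hilbert_fun X (int u - 1) + min (card Y) (u + 1) \<le> hilbert_fun (X \<union> Y) (int u)"
proof -
  obtain Y' where Y': "Y' \<subseteq> Y" "card Y' = min (card Y) (u + 1)" "finite Y'"
    using obtain_subset_with_card_n[of "min (card Y) (u + 1)" Y] by auto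
  obtain A where A: "finite A" "fv.independent A" "card A = hilbert_fun X (int u - 1)"
    "A \<subseteq> fv.span (monomials_on (X \<union> Y) u)" "\<forall>a\<in>A. \<forall>y\<in>Y'. a y = 0"
  proof (cases u)
    case 0
    then show thesis using that[of "{}"] fv.independent_empty by (simp add: hilbert_fun_neg)
  next
    case (Suc u')
    obtain A where "finite A" "fv.independent A" "card A = fv.dim (monomials_on X u')"
      "A \<subseteq> fv.span (monomials_on (X \<union> Y) (Suc u'))" "\<forall>a\<in>A. \<forall>y\<in>Y. a y = 0"
      using independent_line_multiples[OF X0 Y0] by blast
    moreover have "hilbert_fun X (int u - 1) = fv.dim (monomials_on X u')"
      using Suc by (simp add: hilbert_fun_minus_one)
    ultimately show thesis using Suc Y'(1) by (intro that[of A]) auto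
  qed
  have "card Y' \<le> u + 1" "(0, 0, 0) \<notin> Y'" "\<forall>p\<in>Y'. \<forall>q\<in>Y'. proportional p q \<longrightarrow> p = q"
    using Y' Yn Yp by auto
  then have "\<forall>y\<in>Y'. \<exists>f\<in>polyfuns u. f y \<noteq> 0 \<and> (\<forall>y'\<in>Y' - {y}. f y' = 0)"
    using exists_polyfun_vanishing_except[OF Y'(3)] by blast
  then obtain f where
    f: "\<And>y. y \<in> Y' \<Longrightarrow> f y \<in> polyfuns u \<and> f y y \<noteq> 0 \<and> (\<forall>y'\<in>Y' - {y}. f y y' = 0)"
    by metis
  define h where "h y = restrict0 (X \<union> Y) (f y)" for y
  have "fv.independent (A \<union> h ` Y') \<and> card (A \<union> h ` Y') = card A + card Y'"
    using Y'(1) f by (intro independent_Un_diagonal A(1,2,5) Y'(3)) (auto simp: h_def restrict0_def)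
  moreover have "h ` Y' \<subseteq> fv.span (monomials_on (X \<union> Y) u)"
    unfolding h_def restrict0_polyfuns[symmetric] using f by blast
  ultimately have "card A + card Y' \<le> fv.dim (monomials_on (X \<union> Y) u)"
    using fv.card_independent_le_dim[OF finite_monomials_on] A(4) by (metis Un_subset_iff)
  then show ?thesis using A(3) Y'(2) by simp
qed

fun consec_run :: "(nat \<Rightarrow> nat) \<Rightarrow> nat \<Rightarrow> nat" where
  "consec_run d 0 = 0"
| "consec_run d (Suc m) = (if 1 \<le> m \<and> d m + 1 = d (Suc m) then consec_run d m + 1 else 1)"

lemma consec_run_le: "consec_run d m \<le> m"
  by (induction m) auto

lemma consec_run_consecutive: "k < consec_run d m \<Longrightarrow> d (m - k) = d m - k"
proof (induction m arbitrary: k)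
  case (Suc m)
  show ?case
  proof (cases "1 \<le> m \<and> d m + 1 = d (Suc m)")
    case True
    then show ?thesis using Suc by (cases k) auto
  next
    case False
    then have "consec_run d (Suc m) = 1" by (simp only: consec_run.simps if_not_P if_False)
    then show ?thesis using Suc.prems by simp
  qed
qed simp

lemma consec_run_maximal:
  assumes "consec_run d m < m" and "\<And>i. 1 \<le> i \<Longrightarrow> i \<le> m \<Longrightarrow> 0 < d i"
  shows "d (m - consec_run d m) \<noteq> d m - consec_run d m"
  using assms
proof (induction m)
  case (Suc m)
  show ?case
  proof (cases "1 \<le> m \<and> d m + 1 = d (Suc m)")
    case True
    then show ?thesis using Suc by simp
  next
    case False
    then have "consec_run d (Suc m) = 1" by (simp only: consec_run.simps if_not_P if_False)
    then have "1 \<le> m" using Suc.prems(1) by simp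
    then show ?thesis using False Suc.prems(2)[of m] \<open>consec_run d (Suc m) = 1\<close> by auto
  qed
qed simp

lemma consec_tail_eq_consec_run:
  assumes "\<And>i. 1 \<le> i \<Longrightarrow> i \<le> m \<Longrightarrow> 0 < d i"
  shows "consec_tail m d = consec_run d m"
  unfolding consec_tail_def
proof (rule Greatest_equality)
  show "consec_run d m \<le> m \<and> (\<forall>k<consec_run d m. d (m - k) = d m - k)"
    using consec_run_le consec_run_consecutive by blast
  fix t assume t: "t \<le> m \<and> (\<forall>k<t. d (m - k) = d m - k)"
  show "t \<le> consec_run d m"
  proof (rule ccontr)
    assume "\<not> t \<le> consec_run d m"
    then have "consec_run d m < m" "d (m - consec_run d m) = d m - consec_run d m"
      using t by auto
    then show False using consec_run_maximal assms by blast
  qed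
qed

section \<open>Lines in the projective plane\<close>

definition cross :: "'a::field pt \<Rightarrow> 'a pt \<Rightarrow> 'a pt" where
  "cross v w = (case v of (a0, a1, a2) \<Rightarrow> case w of (b0, b1, b2) \<Rightarrow>
     (a1 * b2 - a2 * b1, a2 * b0 - a0 * b2, a0 * b1 - a1 * b0))"

definition smul :: "'a::field \<Rightarrow> 'a pt \<Rightarrow> 'a pt" where
  "smul c w = (case w of (b0, b1, b2) \<Rightarrow> (c * b0, c * b1, c * b2))"

lemma cross_eq_0_imp_smul:
  fixes v w :: "'a::field pt"
  assumes w: "w \<noteq> (0, 0, 0)" and c: "cross v w = (0, 0, 0)"
  shows "\<exists>c. v = smul c w"
proof -
  obtain a0 a1 a2 where v: "v = (a0, a1, a2)" by (cases v)
  obtain b0 b1 b2 where ww: "w = (b0, b1, b2)" by (cases w)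
  have e: "a1 * b2 = a2 * b1" "a2 * b0 = a0 * b2" "a0 * b1 = a1 * b0"
    using c by (auto simp: cross_def v ww)
  consider "b0 \<noteq> 0" | "b1 \<noteq> 0" | "b2 \<noteq> 0" using w ww by auto
  then show ?thesis
  proof cases
    case 1 then show ?thesis using e
      by (intro exI[of _ "a0 / b0"]) (auto simp: smul_def v ww field_simps)
  next
    case 2 then show ?thesis using e
      by (intro exI[of _ "a1 / b1"]) (auto simp: smul_def v ww field_simps)
  next
    case 3 then show ?thesis using e
      by (intro exI[of _ "a2 / b2"]) (auto simp: smul_def v ww field_simps)
  qed
qed

text \<open>A form vanishing at \<open>p\<close> and \<open>q\<close> is orthogonal to both, hence parallel to \<open>p \<times> q\<close>.\<close>
lemma cross_cross_eq_0:
  fixes l p q :: "'a::field pt"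
  assumes "linform l p = 0" "linform l q = 0"
  shows "cross l (cross p q) = (0, 0, 0)"
proof -
  obtain a0 a1 a2 where l: "l = (a0, a1, a2)" by (cases l)
  obtain b0 b1 b2 where p: "p = (b0, b1, b2)" by (cases p)
  obtain c0 c1 c2 where q: "q = (c0, c1, c2)" by (cases q)
  have h1: "a0 * b0 + a1 * b1 + a2 * b2 = 0" and h2: "a0 * c0 + a1 * c1 + a2 * c2 = 0"
    using assms by (auto simp: linform_def l p q)
  have "cross l (cross p q) = (b0 * (a0 * c0 + a1 * c1 + a2 * c2) - c0 * (a0 * b0 + a1 * b1 + a2 * b2),
      b1 * (a0 * c0 + a1 * c1 + a2 * c2) - c1 * (a0 * b0 + a1 * b1 + a2 * b2),
      b2 * (a0 * c0 + a1 * c1 + a2 * c2) - c2 * (a0 * b0 + a1 * b1 + a2 * b2))"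
    by (simp add: cross_def l p q algebra_simps)
  then show ?thesis using h1 h2 by simp
qed

lemma cross_neq_0:
  fixes p q :: "'a::field pt"
  assumes p: "p \<noteq> (0, 0, 0)" and q: "q \<noteq> (0, 0, 0)" and np: "\<not> proportional q p"
  shows "cross p q \<noteq> (0, 0, 0)"
proof
  assume "cross p q = (0, 0, 0)"
  then obtain c where c: "p = smul c q" using cross_eq_0_imp_smul q by blast
  have "c \<noteq> 0" using p c by (cases q) (auto simp: smul_def)
  then have "proportional q p" using c by (cases q) (auto simp: proportional_def smul_def)
  then show False using np by simp
qed

lemma linform_smul: "linform (smul c w) r = c * linform w r"
  by (cases w; cases r) (simp add: linform_def smul_def algebra_simps)

lemma line_pts_eq_if_two_points:
  fixes l l' p q :: "'a::field pt"
  assumes l: "l \<noteq> (0, 0, 0)" and l': "l' \<noteq> (0, 0, 0)"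
    and p: "p \<noteq> (0, 0, 0)" and q: "q \<noteq> (0, 0, 0)" and np: "\<not> proportional q p"
    and h: "linform l p = 0" "linform l q = 0" "linform l' p = 0" "linform l' q = 0"
  shows "line_pts l = line_pts l'"
proof -
  let ?w = "cross p q"
  have w: "?w \<noteq> (0, 0, 0)" using cross_neq_0[OF p q np] .
  obtain c where c: "l = smul c ?w" using cross_eq_0_imp_smul[OF w cross_cross_eq_0[OF h(1,2)]] by blast
  obtain c' where c': "l' = smul c' ?w" using cross_eq_0_imp_smul[OF w cross_cross_eq_0[OF h(3,4)]] by blast
  have "c \<noteq> 0" using l c by (cases ?w) (auto simp: smul_def)
  moreover have "c' \<noteq> 0" using l' c' by (cases ?w) (auto simp: smul_def)
  ultimately show ?thesis
    by (auto simp: line_pts_def on_line_iff_linform c c' linform_smul)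
qed

lemma card_Int_two_lines_le_1:
  fixes X L L' :: "'a::field pt set"
  assumes X: "proj_point_set X" and L: "is_line L" and L': "is_line L'" and ne: "L \<noteq> L'"
  shows "card (X \<inter> L \<inter> L') \<le> 1"
proof -
  have fin: "finite (X \<inter> L \<inter> L')" using X by (simp add: proj_point_set_def)
  obtain l where l: "l \<noteq> (0, 0, 0)" "L = line_pts l" using L by (auto simp: is_line_def)
  obtain l' where l': "l' \<noteq> (0, 0, 0)" "L' = line_pts l'" using L' by (auto simp: is_line_def)
  have "p = q" if pq: "p \<in> X \<inter> L \<inter> L'" "q \<in> X \<inter> L \<inter> L'" for p q
  proof (rule ccontr)
    assume "p \<noteq> q"
    then have "\<not> proportional q p" using X pq by (auto simp: proj_point_set_def)
    moreover have "p \<noteq> (0, 0, 0)" "q \<noteq> (0, 0, 0)" using pq l l' by (auto simp: line_pts_def)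
    moreover have "linform l p = 0" "linform l q = 0" "linform l' p = 0" "linform l' q = 0"
      using pq l l' by (auto simp: line_pts_def on_line_iff_linform)
    ultimately have "L = L'" using line_pts_eq_if_two_points[OF l(1) l'(1)] l l' by metis
    then show False using ne by simp
  qed
  then show ?thesis using fin by (simp add: card_le_Suc0_iff_eq)
qed

lemma infinite_UNIV_alg_closed: "infinite (UNIV :: 'a::alg_closed_field set)"
proof
  assume fin: "finite (UNIV :: 'a set)"
  define q :: "'a poly" where "q = (\<Prod>a\<in>UNIV. [:-a, 1:])"
  have "degree q = card (UNIV :: 'a set)"
    unfolding q_def by (subst degree_prod_sum_eq) auto
  then have "degree (q + 1) > 0" using fin by (simp add: degree_add_eq_left card_gt_0_iff)
  then obtain x where "poly (q + 1) x = 0" using alg_closed_imp_poly_has_root by blast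
  moreover have "poly q x = 0"
    unfolding q_def poly_prod using fin by (intro prod_zero bexI[of _ x]) auto
  ultimately show False by simp
qed

text \<open>The pencil of lines through \<open>p\<close> is parametrised injectively by the field: the line with
  parameter \<open>c\<close> takes the value \<open>c' - c\<close> at the point with parameter \<open>c'\<close>.\<close>
lemma infinite_lines_through:
  fixes p :: "'a::field pt"
  assumes inf: "infinite (UNIV :: 'a set)" and p: "p \<noteq> (0, 0, 0)"
  shows "infinite {L. is_line L \<and> p \<in> L}"
proof -
  obtain p0 p1 p2 where pp: "p = (p0, p1, p2)" by (cases p)
  have pencil: "infinite {L. is_line L \<and> p \<in> L}"
    if n: "\<And>c. n c \<noteq> (0, 0, 0) \<and> linform (n c) p = 0"
     and r: "\<And>c c'. r c \<noteq> (0, 0, 0) \<and> linform (n c') (r c) = c' - c"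
    for n r :: "'a \<Rightarrow> 'a pt"
  proof
    assume fin: "finite {L. is_line L \<and> p \<in> L}"
    have "inj (\<lambda>c. line_pts (n c))"
    proof (rule injI)
      fix c c' assume e: "line_pts (n c) = line_pts (n c')"
      have "r c \<in> line_pts (n c)" using r[of c c] by (simp add: line_pts_def on_line_iff_linform)
      then have "r c \<in> line_pts (n c')" using e by simp
      then have "c' - c = 0" using r[of c c'] by (simp add: line_pts_def on_line_iff_linform)
      then show "c = c'" by simp
    qed
    moreover have "range (\<lambda>c. line_pts (n c)) \<subseteq> {L. is_line L \<and> p \<in> L}"
    proof (rule image_subsetI)
      fix c
      have "is_line (line_pts (n c))" unfolding is_line_def using n by blast
      moreover have "p \<in> line_pts (n c)" using n p by (simp add: line_pts_def on_line_iff_linform)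
      ultimately show "line_pts (n c) \<in> {L. is_line L \<and> p \<in> L}" by simp
    qed
    ultimately have "finite (UNIV :: 'a set)"
      using fin by (meson finite_imageD finite_subset)
    then show False using inf by blast
  qed
  consider "p0 \<noteq> 0" | "p1 \<noteq> 0" | "p2 \<noteq> 0" using p pp by auto
  then show ?thesis
  proof cases
    case 1
    show ?thesis
      by (rule pencil[of "\<lambda>c. (-(p1 + c * p2) / p0, 1, c)" "\<lambda>c. (0, -c, 1)"])
         (use 1 in \<open>auto simp: linform_def pp field_simps\<close>)
  next
    case 2
    show ?thesis
      by (rule pencil[of "\<lambda>c. (1, -(p0 + c * p2) / p1, c)" "\<lambda>c. (-c, 0, 1)"])
         (use 2 in \<open>auto simp: linform_def pp field_simps\<close>)
  next
    case 3
    show ?thesis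
      by (rule pencil[of "\<lambda>c. (1, c, -(p0 + c * p1) / p2)" "\<lambda>c. (-c, 1, 0)"])
         (use 3 in \<open>auto simp: linform_def pp field_simps\<close>)
  qed
qed

lemma sum_card_pairwise_Int_le:
  fixes X :: "'b set" and G :: "'b set set"
  assumes fG: "finite G" and cL: "\<forall>L\<in>G. card (X \<inter> L) = s"
    and cLL: "\<forall>L\<in>G. \<forall>L'\<in>G. L \<noteq> L' \<longrightarrow> card (X \<inter> L \<inter> L') \<le> 1"
  shows "(\<Sum>L\<in>G. \<Sum>L'\<in>G. int (card (X \<inter> L \<inter> L'))) \<le> int (card G) * (int s + int (card G) - 1)"
proof -
  have "(\<Sum>L'\<in>G. int (card (X \<inter> L \<inter> L'))) \<le> int s + int (card G) - 1" if L: "L \<in> G" for L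
  proof -
    have "(\<Sum>L'\<in>G. int (card (X \<inter> L \<inter> L')))
        = int (card (X \<inter> L \<inter> L)) + (\<Sum>L'\<in>G - {L}. int (card (X \<inter> L \<inter> L')))"
      using L fG by (simp add: sum.remove)
    also have "\<dots> \<le> int s + (\<Sum>L'\<in>G - {L}. 1)"
      using cL cLL L by (intro add_mono sum_mono) auto
    also have "(\<Sum>L'\<in>G - {L}. (1::int)) = int (card G) - 1"
    proof -
      have "card G \<ge> 1" using L fG by (metis One_nat_def Suc_leI card_gt_0_iff empty_iff)
      then show ?thesis using L fG by (simp add: card_Diff_singleton of_nat_diff)
    qed
    finally show ?thesis by simp
  qed
  then have "(\<Sum>L\<in>G. \<Sum>L'\<in>G. int (card (X \<inter> L \<inter> L'))) \<le> (\<Sum>L\<in>G. int s + int (card G) - 1)"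
    by (rule sum_mono)
  then show ?thesis by simp
qed

text \<open>Double counting: if \<open>r p\<close> lines of \<open>G\<close> pass through \<open>p\<close>, then \<open>\<Sum> r p = |G| s\<close> and
  \<open>\<Sum> r p\<^sup>2 \<le> |G| (s + |G| - 1)\<close>; sum \<open>4 r - 6 \<le> r\<^sup>2 - r\<close> over \<open>X\<close>.\<close>
lemma lines_incidence_bound:
  fixes X :: "'b set" and G :: "'b set set"
  assumes fX: "finite X" and fG: "finite G"
    and cL: "\<forall>L\<in>G. card (X \<inter> L) = s"
    and cLL: "\<forall>L\<in>G. \<forall>L'\<in>G. L \<noteq> L' \<longrightarrow> card (X \<inter> L \<inter> L') \<le> 1"
  shows "4 * int (card G) * int s - 6 * int (card X) \<le> int (card G) * (int (card G) - 1)"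
proof -
  define chi :: "'b set \<Rightarrow> 'b \<Rightarrow> int" where "chi L p = (if p \<in> L then 1 else 0)" for L p
  define r where "r p = (\<Sum>L\<in>G. chi L p)" for p
  have card_chi: "int (card (X \<inter> L)) = (\<Sum>p\<in>X. chi L p)" for L
    using sum.inter_restrict[OF fX, of "\<lambda>_. 1::int" L] by (simp add: chi_def)
  have "(\<Sum>p\<in>X. r p) = (\<Sum>L\<in>G. \<Sum>p\<in>X. chi L p)" unfolding r_def by (rule sum.swap)
  also have "\<dots> = (\<Sum>L\<in>G. int s)" using cL card_chi by (intro sum.cong) auto
  finally have S1: "(\<Sum>p\<in>X. r p) = int (card G) * int s" by simp
  have "(\<Sum>p\<in>X. r p * r p) = (\<Sum>p\<in>X. \<Sum>L\<in>G. \<Sum>L'\<in>G. chi (L \<inter> L') p)"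
    unfolding r_def sum_product by (intro sum.cong refl) (simp add: chi_def)
  also have "\<dots> = (\<Sum>L\<in>G. \<Sum>L'\<in>G. \<Sum>p\<in>X. chi (L \<inter> L') p)"
    by (subst sum.swap) (intro sum.cong refl sum.swap)
  also have "\<dots> = (\<Sum>L\<in>G. \<Sum>L'\<in>G. int (card (X \<inter> L \<inter> L')))" by (simp add: card_chi Int_assoc)
  finally have S2: "(\<Sum>p\<in>X. r p * r p) \<le> int (card G) * (int s + int (card G) - 1)"
    using sum_card_pairwise_Int_le[OF fG cL cLL] by simp
  have "4 * k - 6 \<le> k * k - k" for k :: int
  proof -
    have "0 \<le> (k - 2) * (k - 3)"
      by (cases "k \<le> 2") (auto intro: mult_nonpos_nonpos mult_nonneg_nonneg)
    then show ?thesis by (simp add: algebra_simps)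
  qed
  then have "(\<Sum>p\<in>X. 4 * r p - 6) \<le> (\<Sum>p\<in>X. r p * r p - r p)"
    by (intro sum_mono)
  then have "4 * (\<Sum>p\<in>X. r p) - 6 * int (card X) \<le> (\<Sum>p\<in>X. r p * r p) - (\<Sum>p\<in>X. r p)"
    by (simp add: sum_subtractf sum_distrib_left)
  then show ?thesis using S1 S2 by (simp add: algebra_simps)
qed

section \<open>k-configurations\<close>

locale kconfig =
  fixes X :: "'a::field pt set" and s :: nat and d :: "nat \<Rightarrow> nat"
    and Xs :: "nat \<Rightarrow> 'a pt set" and Ls :: "nat \<Rightarrow> 'a pt set"
  assumes proj: "proj_point_set X"
    and s_pos: "1 \<le> s" and d1_pos: "1 \<le> d 1" and d_less: "\<And>i. 1 \<le> i \<Longrightarrow> i < s \<Longrightarrow> d i < d (i + 1)"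
    and X_eq: "X = (\<Union>i\<in>{1..s}. Xs i)"
    and Ls_line: "\<And>i. i \<in> {1..s} \<Longrightarrow> is_line (Ls i)"
    and Xs_props: "\<And>i. i \<in> {1..s} \<Longrightarrow> Xs i \<subseteq> X \<and> card (Xs i) = d i \<and> Xs i \<subseteq> Ls i"
    and Ls_distinct: "\<And>i j. i \<in> {1..s} \<Longrightarrow> j \<in> {1..s} \<Longrightarrow> i \<noteq> j \<Longrightarrow> Ls i \<noteq> Ls j"
    and Ls_avoid: "\<And>i j. i \<in> {1..s} \<Longrightarrow> j \<in> {1..s} \<Longrightarrow> 1 < i \<Longrightarrow> j < i \<Longrightarrow>
      Ls i \<inter> Xs j = {}"
begin

definition Ls_form :: "nat \<Rightarrow> 'a pt" where
  "Ls_form i = (SOME l. l \<noteq> (0, 0, 0) \<and> Ls i = line_pts l)"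

lemma Ls_form_spec: "i \<in> {1..s} \<Longrightarrow> Ls_form i \<noteq> (0, 0, 0) \<and> Ls i = line_pts (Ls_form i)"
  using someI_ex[of "\<lambda>l. l \<noteq> (0, 0, 0) \<and> Ls i = line_pts l"] Ls_line
  by (simp add: Ls_form_def is_line_def)

definition X_upto :: "nat \<Rightarrow> 'a pt set" where
  "X_upto m = (\<Union>i\<in>{1..m}. Xs i)"

lemma finite_X: "finite X"
  using proj by (simp add: proj_point_set_def)

lemma finite_Xs: "i \<in> {1..s} \<Longrightarrow> finite (Xs i)"
  using Xs_props finite_X finite_subset by blast

lemma X_upto_0: "X_upto 0 = {}"
  by (simp add: X_upto_def)

lemma X_upto_Suc: "X_upto (Suc m) = X_upto m \<union> Xs (Suc m)"
  by (simp add: X_upto_def atLeastAtMostSuc_conv Un_commute)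

lemma X_upto_s: "X_upto s = X"
  using X_eq by (simp add: X_upto_def)

lemma finite_X_upto: "m \<le> s \<Longrightarrow> finite (X_upto m)"
  using X_eq finite_X by (auto simp: X_upto_def intro: finite_subset)

lemma d_add_le: "1 \<le> i \<Longrightarrow> i \<le> j \<Longrightarrow> j \<le> s \<Longrightarrow> d i + (j - i) \<le> d j"
proof (induction j)
  case (Suc j)
  show ?case
  proof (cases "i = Suc j")
    case False
    then have "d i + (j - i) \<le> d j" "d j < d (j + 1)" using Suc d_less by auto
    then show ?thesis using Suc.prems False by (simp add: Suc_diff_le)
  qed simp
qed simp

lemma index_le_d: "i \<in> {1..s} \<Longrightarrow> i \<le> d i"
  using d_add_le[of 1 i] d1_pos by simp

lemma Xs_on_line: "i \<in> {1..s} \<Longrightarrow> \<forall>y\<in>Xs i. linform (Ls_form i) y = 0"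
  using Xs_props Ls_form_spec by (auto simp: line_pts_def on_line_iff_linform)

lemma X_upto_off_line:
  assumes i: "i \<in> {1..s}"
  shows "\<forall>p\<in>X_upto (i - 1). linform (Ls_form i) p \<noteq> 0"
proof
  fix p assume "p \<in> X_upto (i - 1)"
  then obtain j where j: "j \<in> {1..i - 1}" "p \<in> Xs j" by (auto simp: X_upto_def)
  moreover have "j < i" using j by auto
  ultimately have "Ls i \<inter> Xs j = {}" using Ls_avoid[of i j] i by auto
  then have "p \<notin> Ls i" using j by blast
  moreover have "p \<noteq> (0, 0, 0)"
  proof -
    have "j \<in> {1..s}" using i j by auto
    then have "p \<in> X" using Xs_props j by blast
    then show ?thesis using proj by (auto simp: proj_point_set_def)
  qed
  ultimately show "linform (Ls_form i) p \<noteq> 0" using Ls_form_spec[OF i] by (auto simp: line_pts_def on_line_iff_linform)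
qed

lemma card_X_upto_Suc:
  assumes "Suc m \<le> s"
  shows "card (X_upto (Suc m)) = card (X_upto m) + d (Suc m)"
proof -
  have m: "Suc m \<in> {1..s}" using assms by simp
  have "X_upto m \<inter> Xs (Suc m) = {}" using Xs_on_line[OF m] X_upto_off_line[OF m] by fastforce
  then show ?thesis
    using finite_X_upto[of m] finite_Xs[OF m] Xs_props[OF m] assms by (simp add: X_upto_Suc card_Un_disjoint)
qed

lemma hilbert_fun_X_upto_Suc_ge:
  assumes "Suc m \<le> s"
  shows "hilbert_fun (X_upto m) (int u - 1) + min (d (Suc m)) (u + 1) \<le> hilbert_fun (X_upto (Suc m)) (int u)"
proof -
  have m: "Suc m \<in> {1..s}" using assms by simp
  have "Xs (Suc m) \<subseteq> X" using Xs_props m by blast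
  then have "(0, 0, 0) \<notin> Xs (Suc m)" "\<forall>p\<in>Xs (Suc m). \<forall>q\<in>Xs (Suc m). proportional p q \<longrightarrow> p = q"
    using proj unfolding proj_point_set_def by blast+
  then show ?thesis
    using hilbert_fun_add_line_ge[OF finite_Xs[OF m] Xs_on_line[OF m], of "X_upto m" u]
      X_upto_off_line[OF m] Xs_props[OF m] by (simp add: X_upto_Suc)
qed

lemma hilbert_fun_X_upto_Suc_le:
  assumes "Suc m \<le> s"
  shows "hilbert_fun (X_upto (Suc m)) (int u) \<le> hilbert_fun (X_upto m) (int u - 1) + (u + 1)"
proof -
  have m: "Suc m \<in> {1..s}" using assms by simp
  show ?thesis
    unfolding X_upto_Suc by (rule hilbert_fun_add_line_le) (use Ls_form_spec[OF m] Xs_on_line[OF m] in auto)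
qed

lemma hilbert_fun_X_upto_eq_card:
  "m \<le> s \<Longrightarrow> (0 < m \<Longrightarrow> int (d m) - 1 \<le> v) \<Longrightarrow> hilbert_fun (X_upto m) v = card (X_upto m)"
proof (induction m arbitrary: v)
  case 0
  then show ?case using hilbert_fun_le_card[of "X_upto 0"] by (simp add: X_upto_0)
next
  case (Suc m)
  have "0 \<le> v" using Suc.prems index_le_d[of "Suc m"] by simp
  then obtain u where v: "v = int u" by (rule nonneg_int_cases)
  have "0 < m \<Longrightarrow> int (d m) - 1 \<le> int u - 1"
    using Suc.prems d_less[of m] v by simp
  then have "hilbert_fun (X_upto m) (int u - 1) = card (X_upto m)"
    using Suc.IH[of "int u - 1"] Suc.prems(1) by simp
  then have "card (X_upto (Suc m)) \<le> hilbert_fun (X_upto (Suc m)) v"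
    using hilbert_fun_X_upto_Suc_ge[of m u] card_X_upto_Suc[of m] Suc.prems v by auto
  then show ?case using hilbert_fun_le_card finite_X_upto Suc.prems(1) by (metis le_antisym)
qed

lemma hilbert_fun_X_upto_Suc_eq:
  assumes "Suc m \<le> s"
  shows "hilbert_fun (X_upto (Suc m)) (int (d (Suc m)) - 2)
    = hilbert_fun (X_upto m) (int (d (Suc m)) - 3) + (d (Suc m) - 1)"
proof (cases "d (Suc m) = 1")
  case False
  define u where "u = d (Suc m) - 2"
  have "1 \<le> d (Suc m)" using index_le_d[of "Suc m"] assms by simp
  then have u: "d (Suc m) = u + 2" using False by (simp add: u_def)
  then have "int (d (Suc m)) - 2 = int u" "int (d (Suc m)) - 3 = int u - 1" by simp_all
  then show ?thesis
    using hilbert_fun_X_upto_Suc_ge[OF assms, of u] hilbert_fun_X_upto_Suc_le[OF assms, of u] u by simp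
qed (simp add: hilbert_fun_neg)

text \<open>In degree \<open>d\<^sub>m - 2\<close> the deficiency \<open>|X\<^sub>1 \<union> \<dots> \<union> X\<^sub>m| - H(d\<^sub>m - 2)\<close> is the length of the
  run of consecutive integers ending at \<open>d\<^sub>m\<close>: each step of the run carries the previous deficiency
  over and adds one, while a gap resets it to one.\<close>
lemma hilbert_fun_X_upto_deficiency:
  "Suc m \<le> s \<Longrightarrow>
    hilbert_fun (X_upto (Suc m)) (int (d (Suc m)) - 2) + consec_run d (Suc m) = card (X_upto (Suc m))"
proof (induction m)
  case 0
  then show ?case
    using hilbert_fun_X_upto_Suc_eq[of 0] card_X_upto_Suc[of 0] hilbert_fun_le_card[of "X_upto 0"] d1_pos
    by (simp add: X_upto_0)
next
  case (Suc m)
  let ?m = "Suc m" and ?M = "Suc (Suc m)"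
  have IH: "hilbert_fun (X_upto ?m) (int (d ?m) - 2) + consec_run d ?m = card (X_upto ?m)"
    using Suc by simp
  have lt: "d ?m < d ?M" using d_less[of ?m] Suc.prems by simp
  have step: "hilbert_fun (X_upto ?M) (int (d ?M) - 2) = hilbert_fun (X_upto ?m) (int (d ?M) - 3) + (d ?M - 1)"
    using hilbert_fun_X_upto_Suc_eq Suc.prems by blast
  have card: "card (X_upto ?M) = card (X_upto ?m) + d ?M" using card_X_upto_Suc[OF Suc.prems] .
  show ?case
  proof (cases "d ?m + 1 = d ?M")
    case True
    then have "consec_run d ?M = consec_run d ?m + 1" by simp
    moreover have "hilbert_fun (X_upto ?m) (int (d ?M) - 3) = hilbert_fun (X_upto ?m) (int (d ?m) - 2)"
      by (simp add: True[symmetric])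
    ultimately show ?thesis using step IH card lt by linarith
  next
    case False
    then have "consec_run d ?M = 1" by simp
    moreover have "hilbert_fun (X_upto ?m) (int (d ?M) - 3) = card (X_upto ?m)"
      using hilbert_fun_X_upto_eq_card[of ?m] False lt Suc.prems by simp
    ultimately show ?thesis using step card lt by linarith
  qed
qed

lemma dhilb_eq_consec_run: "dhilb X (d s - 1) = int (consec_run d s)"
proof -
  obtain m where m: "s = Suc m" using s_pos by (cases s) auto
  have ds: "1 \<le> d s" using index_le_d[of s] s_pos by simp
  then have "int (d s - 1) = int (d s) - 1" "int (d s - 1) - 1 = int (d s) - 2" by simp_all
  moreover have "hilbert_fun X (int (d s) - 1) = card X"
    using hilbert_fun_X_upto_eq_card[of s] s_pos X_upto_s by simp
  moreover have "hilbert_fun X (int (d s) - 2) + consec_run d s = card X"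
    using hilbert_fun_X_upto_deficiency[of m] m X_upto_s by simp
  ultimately show ?thesis by (simp add: dhilb_eq_hilbert_fun)
qed

lemma consec_tail_eq: "consec_tail s d = consec_run d s"
proof (rule consec_tail_eq_consec_run)
  fix i assume "1 \<le> i" "i \<le> s"
  then show "0 < d i" using index_le_d[of i] by simp
qed

lemma card_X_Int_Ls_le:
  assumes i: "i \<in> {1..s}"
  shows "card (X \<inter> Ls i) \<le> d i + (s - i)"
proof -
  have "X \<inter> Ls i \<subseteq> Xs i \<union> (\<Union>j\<in>{i+1..s}. X \<inter> Ls i \<inter> Ls j)"
  proof
    fix p assume p: "p \<in> X \<inter> Ls i"
    then obtain j where j: "j \<in> {1..s}" "p \<in> Xs j" using X_eq by auto
    consider "j < i" | "j = i" | "i < j" by linarith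
    then show "p \<in> Xs i \<union> (\<Union>j\<in>{i+1..s}. X \<inter> Ls i \<inter> Ls j)"
    proof cases
      case 1
      then have "Ls i \<inter> Xs j = {}" using Ls_avoid i j by auto
      then show ?thesis using p j by auto
    next
      case 3
      then show ?thesis using p j Xs_props[of j] by auto
    qed (use j in simp)
  qed
  then have "card (X \<inter> Ls i) \<le> card (Xs i \<union> (\<Union>j\<in>{i+1..s}. X \<inter> Ls i \<inter> Ls j))"
    using finite_Xs[OF i] finite_X by (intro card_mono) auto
  also have "\<dots> \<le> card (Xs i) + card (\<Union>j\<in>{i+1..s}. X \<inter> Ls i \<inter> Ls j)" by (rule card_Un_le)
  also have "\<dots> \<le> card (Xs i) + (\<Sum>j\<in>{i+1..s}. card (X \<inter> Ls i \<inter> Ls j))"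
    by (intro add_left_mono card_UN_le) simp
  also have "\<dots> \<le> card (Xs i) + (\<Sum>j\<in>{i+1..s}. 1)"
    using card_Int_two_lines_le_1[OF proj Ls_line[OF i] Ls_line] Ls_distinct[of i] i
    by (intro add_left_mono sum_mono) auto
  finally show ?thesis using Xs_props[OF i] by simp
qed

lemma card_X_Int_line_le:
  assumes L: "is_line L" and "\<forall>i\<in>{1..s}. L \<noteq> Ls i"
  shows "card (X \<inter> L) \<le> s"
proof -
  have "X \<inter> L \<subseteq> (\<Union>i\<in>{1..s}. X \<inter> Ls i \<inter> L)" using X_eq Xs_props by fastforce
  then have "card (X \<inter> L) \<le> card (\<Union>i\<in>{1..s}. X \<inter> Ls i \<inter> L)"
    using finite_X by (intro card_mono) auto
  also have "\<dots> \<le> (\<Sum>i\<in>{1..s}. card (X \<inter> Ls i \<inter> L))" by (rule card_UN_le) simp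
  also have "\<dots> \<le> (\<Sum>i\<in>{1..s}. 1)"
    using card_Int_two_lines_le_1[OF proj Ls_line L] assms(2) by (intro sum_mono) force
  finally show ?thesis by simp
qed

lemma consec_tail_gt:
  assumes i: "i \<in> {1..s}" and h: "d s \<le> d i + (s - i)"
  shows "s - i < consec_tail s d"
proof -
  have "s - i + 1 \<le> s \<and> (\<forall>k<s - i + 1. d (s - k) = d s - k)"
  proof (intro conjI allI impI)
    show "s - i + 1 \<le> s" using i by auto
    fix k assume k: "k < s - i + 1"
    have "d i + (s - k - i) \<le> d (s - k)" "d (s - k) + k \<le> d s"
      using d_add_le[of i "s - k"] d_add_le[of "s - k" s] i k by auto
    then show "d (s - k) = d s - k" using h k by linarith
  qed
  then have "s - i + 1 \<le> consec_tail s d"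
    unfolding consec_tail_def by (rule Greatest_le_nat[where b = s]) simp
  then show ?thesis by simp
qed

lemma card_full_lines_le_if_gap:
  assumes "s < d s"
  shows "card {L. is_line L \<and> card (X \<inter> L) = d s} \<le> consec_tail s d"
proof -
  let ?F = "{L. is_line L \<and> card (X \<inter> L) = d s}"
  have "?F \<subseteq> Ls ` {s + 1 - consec_tail s d..s}"
  proof
    fix L assume L: "L \<in> ?F"
    then obtain i where i: "i \<in> {1..s}" "L = Ls i"
      using card_X_Int_line_le assms by force
    then have "d s \<le> d i + (s - i)" using card_X_Int_Ls_le[OF i(1)] L by simp
    then have "s - i < consec_tail s d" using consec_tail_gt i(1) by blast
    then show "L \<in> Ls ` {s + 1 - consec_tail s d..s}" using i by auto
  qed
  then have "card ?F \<le> card (Ls ` {s + 1 - consec_tail s d..s})" by (intro card_mono) auto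
  also have "\<dots> \<le> card {s + 1 - consec_tail s d..s}" by (rule card_image_le) simp
  finally show ?thesis using consec_tail_eq consec_run_le[of d s] by simp
qed

lemma card_X_upto_triangular:
  "(\<forall>i\<in>{1..s}. d i = i) \<Longrightarrow> m \<le> s \<Longrightarrow> 2 * card (X_upto m) = m * (m + 1)"
  by (induction m) (auto simp: X_upto_0 card_X_upto_Suc)

text \<open>Without a gap, \<open>d\<^sub>i = i\<close> and \<open>X\<close> has \<open>s (s + 1) / 2\<close> points; \<open>s + 2\<close> lines with \<open>s\<close> points
  each would contradict the incidence bound.\<close>
lemma card_full_lines_le_if_no_gap:
  assumes "d s \<le> s" and "2 \<le> s"
  shows "card {L. is_line L \<and> card (X \<inter> L) = d s} \<le> s + 1"
proof (rule ccontr)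
  let ?F = "{L. is_line L \<and> card (X \<inter> L) = d s}"
  have ds: "d s = s" using assms index_le_d[of s] by simp
  have di: "\<forall>i\<in>{1..s}. d i = i"
  proof
    fix i assume i: "i \<in> {1..s}"
    then show "d i = i" using d_add_le[of i s] index_le_d[OF i] ds by auto
  qed
  have cX: "2 * card X = s * (s + 1)" using card_X_upto_triangular[OF di, of s] X_upto_s by simp
  assume "\<not> card ?F \<le> s + 1"
  then have big: "s + 2 \<le> card ?F" by simp
  then have "finite ?F" by (intro card_ge_0_finite) simp
  then obtain G where G: "G \<subseteq> ?F" "card G = s + 2" "finite G"
    using obtain_subset_with_card_n[OF big] by blast
  have "4 * int (card G) * int s - 6 * int (card X) \<le> int (card G) * (int (card G) - 1)"
  proof (rule lines_incidence_bound)
    show "\<forall>L\<in>G. card (X \<inter> L) = s" using G(1) ds by auto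
    show "\<forall>L\<in>G. \<forall>L'\<in>G. L \<noteq> L' \<longrightarrow> card (X \<inter> L \<inter> L') \<le> 1"
      using G(1) card_Int_two_lines_le_1[OF proj] by auto
  qed (use finite_X G(3) in auto)
  moreover have "6 * int (card X) = 3 * (int s * int s) + 3 * int s"
    using arg_cong[OF cX, of int] by (simp add: algebra_simps)
  moreover have "4 * int (card G) * int s = 4 * (int s * int s) + 8 * int s"
    "int (card G) * (int (card G) - 1) = int s * int s + 3 * int s + 2"
    using G(2) by (simp_all add: algebra_simps)
  ultimately have "int s \<le> 1" by linarith
  then show False using assms by simp
qed

lemma card_full_lines_le:
  assumes "infinite (UNIV :: 'a set)"
  shows "card {L. is_line L \<and> card (X \<inter> L) = d s} \<le> consec_tail s d + 1"
proof (cases "s < d s")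
  case True
  then show ?thesis using card_full_lines_le_if_gap by simp
next
  case False
  then have "d s = s" using index_le_d[of s] s_pos by simp
  then have "d s \<le> d 1 + (s - 1)" using d1_pos by simp
  then have "s - 1 < consec_tail s d" using consec_tail_gt[of 1] s_pos by simp
  then have tail: "consec_tail s d = s" using consec_tail_eq consec_run_le[of d s] by simp
  show ?thesis
  proof (cases "s = 1")
    case True
    txt \<open>A single point lies on infinitely many lines, and \<open>card\<close> of an infinite set is \<open>0\<close>.\<close>
    then have "card X = 1" using X_eq Xs_props[of 1] \<open>d s = s\<close> by simp
    then obtain p where p: "X = {p}" by (rule card_1_singletonE)
    have "card ({p} \<inter> L) = 1 \<longleftrightarrow> p \<in> L" for L :: "'a pt set"
      by (cases "p \<in> L") auto
    then have "{L. is_line L \<and> card (X \<inter> L) = d s} = {L. is_line L \<and> p \<in> L}"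
      using p \<open>d s = s\<close> True by auto
    moreover have "p \<noteq> (0, 0, 0)" using p proj by (simp add: proj_point_set_def)
    ultimately show ?thesis using infinite_lines_through[OF assms] by simp
  next
    case False
    then show ?thesis using card_full_lines_le_if_no_gap \<open>d s = s\<close> s_pos tail by simp
  qed
qed

end

lemma k_configuration_kconfig:
  assumes "k_configuration X s d"
  obtains Xs Ls where "kconfig X s d Xs Ls"
proof -
  obtain Xs Ls where
    "proj_point_set X" "1 \<le> s" "1 \<le> d 1" "\<forall>i. 1 \<le> i \<and> i < s \<longrightarrow> d i < d (i + 1)"
    "X = (\<Union>i\<in>{1..s}. Xs i)"
    "\<forall>i\<in>{1..s}. is_line (Ls i) \<and> Xs i \<subseteq> X \<and> card (Xs i) = d i \<and> Xs i \<subseteq> Ls i"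
    "\<forall>i\<in>{1..s}. \<forall>j\<in>{1..s}. i \<noteq> j \<longrightarrow> Ls i \<noteq> Ls j"
    "\<forall>i\<in>{1..s}. \<forall>j\<in>{1..s}. 1 < i \<and> j < i \<longrightarrow> Ls i \<inter> Xs j = {}"
    using assms unfolding k_configuration_def by blast
  then have "kconfig X s d Xs Ls" by unfold_locales blast+
  then show thesis by (rule that)
qed

theorem mainTheorem8:
  fixes X :: "'a::alg_closed_field pt set" and s :: nat and d :: "nat \<Rightarrow> nat"
  assumes "k_configuration X s d"
  shows "dhilb X (d s - 1) = int (consec_tail s d) \<and>
         card {L. is_line L \<and> card (X \<inter> L) = d s} \<le> dhilb X (d s - 1) + 1"
proof -
  obtain Xs Ls where "kconfig X s d Xs Ls" using k_configuration_kconfig[OF assms] .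
  then interpret kconfig X s d Xs Ls .
  show ?thesis
    using dhilb_eq_consec_run consec_tail_eq card_full_lines_le[OF infinite_UNIV_alg_closed] by simp
qed

end
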